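(* Let $N=[n]$, let $v:2^N\to\mathbb{R}_+$ be a gross substitutes valuation, let $X$ be a GS-consistent decision map for $v$, and let $p=(p_1,\dots,p_n)$ be a vector of independent random variables forming a mixed Nash equilibrium of the pricing game defined by $v$ and $X$. Then for every seller $i$: if $v(\{i\}\mid N\setminus\{i\})>0$, then $p_i=v(\{i\}\mid N\setminus\{i\})$ and $i\in X(p)$ deterministically (with probability $1$); and if $v(\{i\}\mid N\setminus\{i\})=0$, then $\mathbb{E}[u_i(p)]=0$.
   Context: Pricing game: $N=[n]$ services, service $i$ controlled by seller $i$. Buyer valuation $v:2^N\to\mathbb{R}_+$, monotone, $v(\emptyset)=0$. Marginal value $v(T\mid S)=v(S\cup T)-v(S)$. For $p\in\mathbb{R}^n_+$, $p(S)=\sum_{j\in S}p_j$, $D(v;p)=\arg\max_{S\subseteq N}(v(S)-p(S))$. $v$ is gross substitutes if for every $p$, every $S\in D(v;p)$ and every $p'\ge p$ there is $T\in D(v;p')$ with $S\cap\{j:p_j=p'_j\}\subseteq T$. A decision map is $X:\mathbb{R}^n_+\to2^N$ with $X(p)\in D(v;p)$ for all $p$; it is GS-consistent if for all $p'\ge p$, $X(p)\cap\{j:p_j=p'_j\}\subseteq X(p')$. Seller $i$'s utility is $u_i(p)=p_i\mathbf{1}\{i\in X(p)\}$. A mixed Nash equilibrium is a vector of independent $\mathbb{R}_+$-valued random variables $p=(p_1,\dots,p_n)$ with $\mathbb{E}[u_i(p_i,p_{-i})]\ge\mathbb{E}[u_i(p_i',p_{-i})]$ for all $i$ and all $p_i'\in\mathbb{R}_+$.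 *)

theory Defs
  imports "HOL-Probability.Probability"
begin

text \<open>Services are the elements of a finite type 'a (playing the role of N = [n]).
  Price vectors are functions 'a => real; R^n_+ is the set of nonnegative ones.\<close>

definition price_sum :: "('a \<Rightarrow> real) \<Rightarrow> 'a set \<Rightarrow> real" where
  "price_sum p S = (\<Sum>j\<in>S. p j)"

definition marginal :: "('a set \<Rightarrow> real) \<Rightarrow> 'a set \<Rightarrow> 'a set \<Rightarrow> real" where
  "marginal v T S = v (S \<union> T) - v S"

definition valuation :: "('a set \<Rightarrow> real) \<Rightarrow> bool" where
  "valuation v \<longleftrightarrow> v {} = 0 \<and> (\<forall>S. v S \<ge> 0) \<and> (\<forall>S T. S \<subseteq> T \<longrightarrow> v S \<le> v T)"

definition demand :: "('a set \<Rightarrow> real) \<Rightarrow> ('a \<Rightarrow> real) \<Rightarrow> 'a set set" where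
  "demand v p = {S. \<forall>T. v T - price_sum p T \<le> v S - price_sum p S}"

definition gross_substitutes :: "('a set \<Rightarrow> real) \<Rightarrow> bool" where
  "gross_substitutes v \<longleftrightarrow>
     (\<forall>p p' S. (\<forall>j. 0 \<le> p j) \<longrightarrow> p \<le> p' \<longrightarrow> S \<in> demand v p \<longrightarrow>
        (\<exists>T\<in>demand v p'. S \<inter> {j. p j = p' j} \<subseteq> T))"

definition decision_map :: "('a set \<Rightarrow> real) \<Rightarrow> (('a \<Rightarrow> real) \<Rightarrow> 'a set) \<Rightarrow> bool" where
  "decision_map v X \<longleftrightarrow> (\<forall>p. (\<forall>j. 0 \<le> p j) \<longrightarrow> X p \<in> demand v p)"

definition GS_consistent :: "(('a \<Rightarrow> real) \<Rightarrow> 'a set) \<Rightarrow> bool" where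
  "GS_consistent X \<longleftrightarrow>
     (\<forall>p p'. (\<forall>j. 0 \<le> p j) \<longrightarrow> p \<le> p' \<longrightarrow> X p \<inter> {j. p j = p' j} \<subseteq> X p')"

definition seller_utility :: "(('a \<Rightarrow> real) \<Rightarrow> 'a set) \<Rightarrow> 'a \<Rightarrow> ('a \<Rightarrow> real) \<Rightarrow> real" where
  "seller_utility X i p = (if i \<in> X p then p i else 0)"

text \<open>A mixed Nash equilibrium: independent price distributions M i on R_+ (the joint
  law is the product measure PiM UNIV M).  Measurability of the utility functions is
  required so that the expectations are well defined; expectations of the nonnegative
  utilities are taken as nonnegative (extended) Lebesgue integrals.\<close>

definition mixed_NE :: "(('a \<Rightarrow> real) \<Rightarrow> 'a set) \<Rightarrow> ('a \<Rightarrow> real measure) \<Rightarrow> bool" where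
  "mixed_NE X M \<longleftrightarrow>
     (\<forall>i. prob_space (M i) \<and> sets (M i) = sets borel \<and> (AE x in M i. 0 \<le> x)) \<and>
     (\<forall>i. (\<lambda>p. seller_utility X i p) \<in> borel_measurable (PiM UNIV M)) \<and>
     (\<forall>i x. 0 \<le> x \<longrightarrow> (\<lambda>p. seller_utility X i (p(i := x))) \<in> borel_measurable (PiM UNIV M)) \<and>
     (\<forall>i x. 0 \<le> x \<longrightarrow>
        (\<integral>\<^sup>+ p. ennreal (seller_utility X i (p(i := x))) \<partial>PiM UNIV M)
          \<le> (\<integral>\<^sup>+ p. ennreal (seller_utility X i p) \<partial>PiM UNIV M))"

end

theory Submission
  imports Defs
begin

text \<open>Write m_i = v(N) - v(N - {i}). By GS-consistency seller i sells at every price below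
  m_i, so its equilibrium payoff is at least m_i. Conversely, active sellers never price above
  their marginals: let E > 0 be the largest essential excess of p_j over m_j among active
  sellers. The exchange property of gross substitutes valuations shows that whenever k sells
  at m_k + l, some active rival j is left unsold at a price of at least m_j + l although it
  would sell at any lower price. If some active seller has an atom at m_k + E, the rivals'
  unsold mass at the top of their supports makes a small undercut profitable for one of
  them; otherwise the probability that a rival prices in the top interval [m_j + l, m_j + E]
  vanishes as l tends to E, so selling near the top earns too little. Hence p_i \<le> m_i
  almost surely, which together with the payoff bound forces p_i = m_i and a sale.\<close>

lemma price_sum_ge_member:
  "(\<And>j. 0 \<le> p j) \<Longrightarrow> j \<in> S \<Longrightarrow> p j \<le> price_sum p (S::'a::finite set)"
  unfolding price_sum_def by (rule member_le_sum) auto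

lemma price_sum_upd_notin: "j \<notin> S \<Longrightarrow> price_sum (p(j := y)) S = price_sum p S"
  unfolding price_sum_def by (rule sum.cong) auto

lemma price_sum_insert:
  "j \<notin> S \<Longrightarrow> price_sum p (insert j (S::'a::finite set)) = p j + price_sum p S"
  unfolding price_sum_def by simp

lemma price_sum_remove: "j \<in> S \<Longrightarrow> price_sum p (S::'a::finite set) = p j + price_sum p (S - {j})"
  unfolding price_sum_def by (simp add: sum.remove)

lemma valuation_mono: "valuation v \<Longrightarrow> S \<subseteq> T \<Longrightarrow> v S \<le> v T"
  unfolding valuation_def by blast

lemma valuation_nonneg: "valuation v \<Longrightarrow> 0 \<le> v S"
  unfolding valuation_def by blast

lemma demandD: "S \<in> demand v p \<Longrightarrow> v T - price_sum p T \<le> v S - price_sum p S"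
  unfolding demand_def by blast

lemma demandI: "(\<And>T. v T - price_sum p T \<le> v S - price_sum p S) \<Longrightarrow> S \<in> demand v p"
  unfolding demand_def by blast

lemma gross_substitutesD:
  assumes "gross_substitutes v" "\<And>j. 0 \<le> p j" "p \<le> p'" "S \<in> demand v p"
  obtains T where "T \<in> demand v p'" "S \<inter> {j. p j = p' j} \<subseteq> T"
  using assms unfolding gross_substitutes_def by blast

section \<open>Gross substitutes valuations\<close>

locale block_prices =
  fixes v :: "'a::finite set \<Rightarrow> real" and p :: "'a \<Rightarrow> real" and T K :: "'a set"
  assumes valuation: "valuation v" and nonneg: "\<And>j. 0 \<le> p j"
    and free: "\<And>j. j \<in> T \<Longrightarrow> p j = 0"
    and prohibitive: "\<And>j. j \<notin> T \<Longrightarrow> j \<notin> K \<Longrightarrow> v UNIV < p j"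
    and disjoint: "T \<inter> K = {}"
begin

lemma price_sum_free_Un: "S \<subseteq> K \<Longrightarrow> price_sum p (T \<union> S) = price_sum p S"
proof -
  assume "S \<subseteq> K"
  hence "T \<inter> S = {}" using disjoint by blast
  hence "price_sum p (T \<union> S) = price_sum p T + price_sum p S"
    unfolding price_sum_def by (simp add: sum.union_disjoint)
  moreover have "price_sum p T = 0" unfolding price_sum_def using free by simp
  ultimately show ?thesis by simp
qed

lemma utility_le_block:
  "v Z - price_sum p Z < 0 \<or> v Z - price_sum p Z \<le> v (T \<union> (Z \<inter> K)) - price_sum p (Z \<inter> K)"
proof (cases "Z \<subseteq> T \<union> K")
  case True
  have "Z = (Z \<inter> K) \<union> (Z \<inter> T)" "(Z \<inter> K) \<inter> (Z \<inter> T) = {}" using True disjoint by blast+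
  hence "price_sum p Z = price_sum p (Z \<inter> K) + price_sum p (Z \<inter> T)"
    unfolding price_sum_def by (metis finite sum.union_disjoint)
  moreover have "price_sum p (Z \<inter> T) = 0" unfolding price_sum_def using free by simp
  moreover have "v Z \<le> v (T \<union> (Z \<inter> K))" using True by (intro valuation_mono[OF valuation]) blast
  ultimately show ?thesis by linarith
next
  case False
  then obtain j where j: "j \<in> Z" "j \<notin> T" "j \<notin> K" by blast
  have "p j \<le> price_sum p Z" by (rule price_sum_ge_member[OF nonneg j(1)])
  moreover have "v Z \<le> v UNIV" by (rule valuation_mono[OF valuation]) simp
  ultimately show ?thesis using prohibitive[OF j(2,3)] by linarith
qed

lemma demand_block:
  assumes "S \<subseteq> K" and "0 \<le> v (T \<union> S) - price_sum p S"
    and "\<And>Z. Z \<subseteq> K \<Longrightarrow> v (T \<union> Z) - price_sum p Z \<le> v (T \<union> S) - price_sum p S"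
  shows "T \<union> S \<in> demand v p"
proof (rule demandI)
  fix Z
  have "v Z - price_sum p Z \<le> v (T \<union> S) - price_sum p S"
    using utility_le_block[of Z] assms(2) assms(3)[of "Z \<inter> K"] by auto
  thus "v Z - price_sum p Z \<le> v (T \<union> S) - price_sum p (T \<union> S)"
    using price_sum_free_Un[OF assms(1)] by simp
qed

lemma demand_blockD:
  assumes "Z \<in> demand v p" and "S \<subseteq> K"
  shows "v (T \<union> S) - price_sum p S \<le> v (T \<union> (Z \<inter> K)) - price_sum p (Z \<inter> K)"
proof -
  have "v {} - price_sum p {} \<le> v Z - price_sum p Z"
    and "v (T \<union> S) - price_sum p (T \<union> S) \<le> v Z - price_sum p Z"
    using demandD[OF assms(1)] by blast+
  moreover have "v {} = 0" using valuation unfolding valuation_def by blast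
  moreover have "price_sum p {} = 0" unfolding price_sum_def by simp
  ultimately show ?thesis
    using utility_le_block[of Z] price_sum_free_Un[OF assms(2)] by linarith
qed

end

lemma block_pricesI:
  assumes "valuation v" "\<And>j. 0 \<le> p j" "\<And>j. j \<in> T \<Longrightarrow> p j = 0"
    "\<And>j. j \<notin> T \<Longrightarrow> j \<notin> K \<Longrightarrow> p j = v UNIV + 1" "T \<inter> K = {}"
  shows "block_prices v p T K"
  using assms by unfold_locales auto

text \<open>Price e strictly between the two marginals and make Y free: then insert e Y is demanded,
  and raising the prices of Y - X keeps e demanded, which is too expensive on top of X.\<close>

lemma gross_substitutes_submodular:
  fixes v :: "'a::finite set \<Rightarrow> real"
  assumes val: "valuation v" and gs: "gross_substitutes v" and XY: "X \<subseteq> Y" and e: "e \<notin> Y"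
  shows "v (insert e Y) - v Y \<le> v (insert e X) - v X"
proof (rule ccontr)
  assume "\<not> ?thesis"
  then obtain \<alpha> where \<alpha>: "v (insert e X) - v X < \<alpha>" "\<alpha> < v (insert e Y) - v Y"
    by (meson dense not_le)
  have "v X \<le> v (insert e X)" by (rule valuation_mono[OF val]) blast
  hence "0 \<le> \<alpha>" using \<alpha>(1) by linarith
  define q where "q Z j = (if j \<in> Z then 0 else if j = e then \<alpha> else v UNIV + 1)" for Z j
  have block: "block_prices v (q Z) Z {e}" if "e \<notin> Z" for Z
    using that \<open>0 \<le> \<alpha>\<close> valuation_nonneg[OF val, of UNIV]
    by (intro block_pricesI[OF val]) (auto simp: q_def)
  interpret Y: block_prices v "q Y" Y "{e}" by (rule block) fact
  interpret X: block_prices v "q X" X "{e}" by (rule block) (use XY e in blast)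
  have qe: "q Z e = \<alpha>" "price_sum (q Z) {e} = \<alpha>" if "e \<notin> Z" for Z
    using that by (simp_all add: q_def price_sum_def)
  have demY: "Y \<union> {e} \<in> demand v (q Y)"
  proof (rule Y.demand_block)
    have "v Y \<le> v (Y \<union> {e}) - \<alpha>" using \<alpha>(2) by simp
    moreover have "price_sum (q Y) {} = 0" by (simp add: price_sum_def)
    ultimately show "v (Y \<union> Z) - price_sum (q Y) Z \<le> v (Y \<union> {e}) - price_sum (q Y) {e}"
      if "Z \<subseteq> {e}" for Z
      using that qe[OF e] by (cases "Z = {}") (auto simp: subset_singleton_iff)
    show "0 \<le> v (Y \<union> {e}) - price_sum (q Y) {e}"
      using \<alpha>(2) valuation_nonneg[OF val, of Y] qe[OF e] by simp
  qed simp
  have "q Y \<le> q X" using XY e valuation_nonneg[OF val, of UNIV] by (auto simp: le_fun_def q_def)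
  then obtain Z where Z: "Z \<in> demand v (q X)" "(Y \<union> {e}) \<inter> {j. q Y j = q X j} \<subseteq> Z"
    using gross_substitutesD[OF gs Y.nonneg _ demY] by blast
  have "q Y e = q X e" using qe XY e by blast
  hence "e \<in> Z" using Z(2) by blast
  hence "Z \<inter> {e} = {e}" by blast
  hence "v (X \<union> {}) - price_sum (q X) {} \<le> v (X \<union> {e}) - price_sum (q X) {e}"
    using X.demand_blockD[OF Z(1), of "{}"] by simp
  hence "v X \<le> v (insert e X) - \<alpha>" using qe[of X] XY e by (auto simp: price_sum_def)
  with \<alpha>(1) show False by simp
qed

text \<open>Prices for a, b, c making T \<union> {a, b} and T \<union> {c} optimal with utility wc - x, while
  the other bundles containing b are strictly worse.\<close>

lemma triplet_prices:
  fixes w0 wa wb wc wab wac wbc wabc :: real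
  assumes H1: "wb + wac < wc + wab" and H2: "wa + wbc < wc + wab"
    and S1: "wabc - wab \<le> wac - wa" and S2: "wabc - wab \<le> wbc - wb"
    and S3: "wac - wc \<le> wa - w0" and S4: "wab - wa \<le> wb - w0"
    and M: "0 \<le> w0" "w0 \<le> wc" "wa \<le> wab" "wb \<le> wab" "wc \<le> wac" "wc \<le> wbc"
      "wab \<le> wabc" "wac \<le> wabc" "wbc \<le> wabc"
  obtains \<beta>a \<beta>b x where "0 < \<beta>a" "0 < \<beta>b" "0 \<le> x" "w0 \<le> wc - x"
    "wa - \<beta>a \<le> wc - x" "wb - \<beta>b < wc - x" "wab - \<beta>a - \<beta>b = wc - x"
    "wac - \<beta>a - x \<le> wc - x" "wbc - \<beta>b - x < wc - x" "wabc - \<beta>a - \<beta>b - x \<le> wc - x"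
proof -
  have H3: "wabc + w0 < wc + wab"
  proof (rule ccontr)
    assume "\<not> ?thesis"
    hence "wac = wc + wa - w0" using S1 S3 by linarith
    thus False using H1 S4 by linarith
  qed
  define x where "x = (max (wabc - wab) (wbc + wac - wc - wab) + min (wc - w0) (wc + wab - wb - wa)) / 2"
  have x: "wabc - wab < x" "wbc + wac - wc - wab < x" "x < wc - w0" "x < wc + wab - wb - wa"
    using H1 H2 H3 S2 S4 M unfolding x_def by (simp_all add: max_def min_def)
  define s where "s = wab - wc + x"
  define La where "La = max 0 (max (wa - wc + x) (wac - wc))"
  define Lb where "Lb = max 0 (max (wb - wc + x) (wbc - wc))"
  have "La + Lb < s" unfolding La_def Lb_def s_def using x H1 H2 M by (simp add: max_def)
  define \<beta>b where "\<beta>b = (Lb + s - La) / 2"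
  have "La < s - \<beta>b" "Lb < \<beta>b" using \<open>La + Lb < s\<close> unfolding \<beta>b_def by (auto simp: field_simps)
  moreover have "0 \<le> La" "wa - wc + x \<le> La" "wac - wc \<le> La"
    and "0 \<le> Lb" "wb - wc + x \<le> Lb" "wbc - wc \<le> Lb"
    unfolding La_def Lb_def by auto
  ultimately show ?thesis
    using x M by (intro that[of "s - \<beta>b" \<beta>b x]) (auto simp: s_def)
qed

lemma subset_of_three:
  assumes "Z \<subseteq> {a, b, c}"
  obtains "Z = {}" | "Z = {a}" | "Z = {b}" | "Z = {c}" | "Z = {a, b}" | "Z = {a, c}" | "Z = {b, c}" | "Z = {a, b, c}"
proof -
  have "Z = (if a \<in> Z then {a} else {}) \<union> (if b \<in> Z then {b} else {}) \<union> (if c \<in> Z then {c} else {})"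
    using assms by auto
  then show ?thesis using that by (simp add: insert_commute split: if_splits)
qed

lemma gross_substitutes_triplet_prices:
  fixes v :: "'a::finite set \<Rightarrow> real"
  assumes val: "valuation v" and gs: "gross_substitutes v"
    and ab: "a \<noteq> b" and ac: "a \<noteq> c" and bc: "b \<noteq> c"
    and aT: "a \<notin> T" and bT: "b \<notin> T" and cT: "c \<notin> T"
    and H: "v (insert b T) + v (insert a (insert c T)) < v (insert c T) + v (insert a (insert b T))"
      "v (insert a T) + v (insert b (insert c T)) < v (insert c T) + v (insert a (insert b T))"
  obtains \<beta>a \<beta>b x where "0 < \<beta>a" "0 < \<beta>b" "0 \<le> x" "v T \<le> v (insert c T) - x"
    "v (insert a T) - \<beta>a \<le> v (insert c T) - x" "v (insert b T) - \<beta>b < v (insert c T) - x"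
    "v (insert a (insert b T)) - \<beta>a - \<beta>b = v (insert c T) - x"
    "v (insert a (insert c T)) - \<beta>a - x \<le> v (insert c T) - x"
    "v (insert b (insert c T)) - \<beta>b - x < v (insert c T) - x"
    "v (insert a (insert b (insert c T))) - \<beta>a - \<beta>b - x \<le> v (insert c T) - x"
proof -
  note submod = gross_substitutes_submodular[OF val gs]
  have S: "v (insert a (insert b (insert c T))) - v (insert a (insert b T)) \<le> v (insert a (insert c T)) - v (insert a T)"
    "v (insert a (insert b (insert c T))) - v (insert a (insert b T)) \<le> v (insert b (insert c T)) - v (insert b T)"
    "v (insert a (insert c T)) - v (insert c T) \<le> v (insert a T) - v T"
    "v (insert a (insert b T)) - v (insert a T) \<le> v (insert b T) - v T"
    using submod[of "insert a T" "insert a (insert b T)" c] submod[of "insert b T" "insert a (insert b T)" c]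
      submod[of T "insert c T" a] submod[of T "insert a T" b] ab ac bc aT bT cT
    by (auto simp: insert_commute)
  note mono = valuation_mono[OF val]
  have M: "0 \<le> v T" "v T \<le> v (insert c T)" "v (insert a T) \<le> v (insert a (insert b T))"
    "v (insert b T) \<le> v (insert a (insert b T))" "v (insert c T) \<le> v (insert a (insert c T))"
    "v (insert c T) \<le> v (insert b (insert c T))"
    "v (insert a (insert b T)) \<le> v (insert a (insert b (insert c T)))"
    "v (insert a (insert c T)) \<le> v (insert a (insert b (insert c T)))"
    "v (insert b (insert c T)) \<le> v (insert a (insert b (insert c T)))"
    by (auto intro: mono valuation_nonneg[OF val])
  show ?thesis using triplet_prices[OF H S M] that by blast
qed

text \<open>If the inequality failed, there would be prices at which T \<union> {a, b} is demanded and
  every bundle containing b is strictly worse than T \<union> {c}; raising the price of a then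
  contradicts gross substitutability.\<close>

lemma gross_substitutes_triplet:
  fixes v :: "'a::finite set \<Rightarrow> real"
  assumes val: "valuation v" and gs: "gross_substitutes v"
    and ab: "a \<noteq> b" and ac: "a \<noteq> c" and bc: "b \<noteq> c"
    and aT: "a \<notin> T" and bT: "b \<notin> T" and cT: "c \<notin> T"
  shows "v (insert a (insert b T)) + v (insert c T) \<le>
     max (v (insert a (insert c T)) + v (insert b T)) (v (insert b (insert c T)) + v (insert a T))"
proof (rule ccontr)
  assume "\<not> ?thesis"
  hence "v (insert b T) + v (insert a (insert c T)) < v (insert c T) + v (insert a (insert b T))"
    "v (insert a T) + v (insert b (insert c T)) < v (insert c T) + v (insert a (insert b T))"
    by auto
  then obtain \<beta>a \<beta>b x where \<beta>: "0 < \<beta>a" "0 < \<beta>b" "0 \<le> x" "v T \<le> v (insert c T) - x"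
    "v (insert a T) - \<beta>a \<le> v (insert c T) - x" "v (insert b T) - \<beta>b < v (insert c T) - x"
    "v (insert a (insert b T)) - \<beta>a - \<beta>b = v (insert c T) - x"
    "v (insert a (insert c T)) - \<beta>a - x \<le> v (insert c T) - x"
    "v (insert b (insert c T)) - \<beta>b - x < v (insert c T) - x"
    "v (insert a (insert b (insert c T))) - \<beta>a - \<beta>b - x \<le> v (insert c T) - x"
    using gross_substitutes_triplet_prices[OF val gs ab ac bc aT bT cT] by blast
  define p where "p j = (if j \<in> T then 0 else if j = a then \<beta>a else if j = b then \<beta>b
    else if j = c then x else v UNIV + 1)" for j
  define p' where "p' = p(a := \<beta>a + 1)"
  have p: "p a = \<beta>a" "p b = \<beta>b" "p c = x" "p' a = \<beta>a + 1" "p' b = \<beta>b" "p' c = x"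
    using ab ac bc aT bT cT by (auto simp: p'_def p_def)
  interpret B: block_prices v p T "{a, b, c}"
    using \<beta> valuation_nonneg[OF val, of UNIV] aT bT cT
    by (intro block_pricesI[OF val]) (auto simp: p_def)
  interpret B': block_prices v p' T "{a, b, c}"
    using \<beta> valuation_nonneg[OF val, of UNIV] aT bT cT
    by (intro block_pricesI[OF val]) (auto simp: p'_def p_def)
  have dem: "T \<union> {a, b} \<in> demand v p"
  proof (rule B.demand_block)
    show "v (T \<union> Z) - price_sum p Z \<le> v (T \<union> {a, b}) - price_sum p {a, b}" if "Z \<subseteq> {a, b, c}" for Z
      using that by (cases rule: subset_of_three) (use \<beta> p ab ac bc in \<open>simp_all add: price_sum_def\<close>)
    show "0 \<le> v (T \<union> {a, b}) - price_sum p {a, b}"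
      using \<beta> p ab valuation_nonneg[OF val, of T] by (simp add: price_sum_def)
  qed blast
  have "p \<le> p'" using p by (simp add: p'_def le_fun_def)
  then obtain Z where Z: "Z \<in> demand v p'" "(T \<union> {a, b}) \<inter> {j. p j = p' j} \<subseteq> Z"
    using gross_substitutesD[OF gs B.nonneg _ dem] by blast
  have "b \<in> Z" using Z(2) ab by (auto simp: p'_def)
  have "Z \<inter> {a, b, c} \<subseteq> {a, b, c}" by blast
  moreover have "v (T \<union> {c}) - price_sum p' {c} \<le> v (T \<union> (Z \<inter> {a, b, c})) - price_sum p' (Z \<inter> {a, b, c})"
    by (rule B'.demand_blockD[OF Z(1)]) blast
  moreover have "b \<in> Z \<inter> {a, b, c}" using \<open>b \<in> Z\<close> by blast
  ultimately show False
    by (cases rule: subset_of_three) (use \<beta> p ab ac bc in \<open>simp_all add: price_sum_def\<close>)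
qed

lemma gross_substitutes_exchange_step:
  fixes v :: "'a::finite set \<Rightarrow> real"
  assumes val: "valuation v" and gs: "gross_substitutes v"
    and U: "i \<in> U" "y0 \<in> U" "y1 \<in> U" and distinct: "y0 \<noteq> i" "y1 \<noteq> i" "y1 \<noteq> y0"
    and y0_max: "v (insert y1 A) + v (U - {i} - {y1}) \<le> v (insert y0 A) + v (U - {i} - {y0})"
    and y1_good: "v (insert i A) + v (U - {i} - {y0}) \<le> v (insert y1 A) + v (U - {y0} - {y1})"
  shows "\<exists>y\<in>{y0, y1}. v (insert i A) + v (U - {i}) \<le> v (insert y A) + v (U - {y})"
proof -
  define T where "T = U - {i, y0, y1}"
  have "v (insert y0 (insert y1 T)) + v (insert i T) \<le>
    max (v (insert y0 (insert i T)) + v (insert y1 T)) (v (insert y1 (insert i T)) + v (insert y0 T))"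
    by (rule gross_substitutes_triplet[OF val gs]) (use distinct in \<open>auto simp: T_def\<close>)
  moreover have "insert y0 (insert y1 T) = U - {i}" "insert i T = U - {y0} - {y1}"
    "insert y0 (insert i T) = U - {y1}" "insert y1 T = U - {i} - {y0}"
    "insert y1 (insert i T) = U - {y0}" "insert y0 T = U - {i} - {y1}"
    unfolding T_def using U distinct by blast+
  ultimately have "v (U - {i}) + v (U - {y0} - {y1}) \<le>
      max (v (U - {y1}) + v (U - {i} - {y0})) (v (U - {y0}) + v (U - {i} - {y1}))"
    by simp
  thus ?thesis using y0_max y1_good by (auto simp: max_def split: if_splits)
qed

text \<open>Induction on U - A, removing from U a maximiser y0 of v (insert y A) + v (U - {i} - {y});
  the triplet condition passes the exchange from U - {y0} back to U.\<close>

lemma gross_substitutes_exchange: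
  fixes v :: "'a::finite set \<Rightarrow> real"
  assumes val: "valuation v" and gs: "gross_substitutes v"
  shows "A \<subseteq> U \<Longrightarrow> i \<in> U \<Longrightarrow> i \<notin> A \<Longrightarrow>
    v (insert i A) + v (U - {i}) \<le> v A + v U \<or>
    (\<exists>y \<in> U - A - {i}. v (insert i A) + v (U - {i}) \<le> v (insert y A) + v (U - {y}))"
proof (induction "card (U - A)" arbitrary: U rule: less_induct)
  case less
  note AU = less.prems(1) and iU = less.prems(2) and iA = less.prems(3)
  define B where "B = U - A - {i}"
  show ?case
  proof (cases "B = {}")
    case True
    hence "U = insert i A" using AU iU unfolding B_def by blast
    thus ?thesis using iA by (simp add: insert_Diff_if)
  next
    case False
    define \<psi> where "\<psi> y = v (insert y A) + v (U - {i} - {y})" for y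
    obtain y0 where y0: "y0 \<in> B" and "Max (\<psi> ` B) = \<psi> y0"
      using obtains_MAX[of B \<psi>] False finite by blast
    hence y0_max: "\<psi> y \<le> \<psi> y0" if "y \<in> B" for y
      using that by (metis Max_ge finite finite_imageI imageI)
    have y0U: "y0 \<in> U" "y0 \<notin> A" "y0 \<noteq> i" using y0 unfolding B_def by auto
    have "card (U - {y0} - A) < card (U - A)"
      using y0U by (intro psubset_card_mono) auto
    hence IH: "v (insert i A) + v (U - {y0} - {i}) \<le> v A + v (U - {y0}) \<or>
      (\<exists>y \<in> U - {y0} - A - {i}. v (insert i A) + v (U - {y0} - {i}) \<le> v (insert y A) + v (U - {y0} - {y}))"
      using less.hyps AU iU iA y0U by blast
    show ?thesis
    proof (cases "v (insert i A) + v (U - {y0} - {i}) \<le> v A + v (U - {y0})")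
      case True
      have "v (insert y0 (U - {i} - {y0})) - v (U - {i} - {y0}) \<le> v (insert y0 A) - v A"
        by (rule gross_substitutes_submodular[OF val gs]) (use AU iA y0U in auto)
      moreover have "insert y0 (U - {i} - {y0}) = U - {i}" "U - {y0} - {i} = U - {i} - {y0}"
        using y0U by blast+
      ultimately have "v (insert i A) + v (U - {i}) \<le> v (insert y0 A) + v (U - {y0})"
        using True by simp
      thus ?thesis using y0 unfolding B_def by blast
    next
      case False
      then obtain y1 where y1: "y1 \<in> U - {y0} - A - {i}"
        and y1_good: "v (insert i A) + v (U - {y0} - {i}) \<le> v (insert y1 A) + v (U - {y0} - {y1})"
        using IH by blast
      have "U - {y0} - {i} = U - {i} - {y0}" by blast
      hence "\<exists>y\<in>{y0, y1}. v (insert i A) + v (U - {i}) \<le> v (insert y A) + v (U - {y})"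
        using y1 y1_good y0U y0_max[of y1] iU unfolding \<psi>_def B_def
        by (intro gross_substitutes_exchange_step[OF val gs]) auto
      moreover have "y1 \<in> B" using y1 unfolding B_def by blast
      ultimately show ?thesis using y0 unfolding B_def by blast
    qed
  qed
qed

text \<open>The exchange property for A = S - {i} and U = N yields an item j that can replace i;
  it is demanded whenever its price undercuts its marginal by less than p i exceeds that of i.\<close>

lemma demand_overpriced_rival:
  fixes v :: "'a::finite set \<Rightarrow> real"
  assumes val: "valuation v" and gs: "gross_substitutes v"
    and S: "S \<in> demand v p" and iS: "i \<in> S" and over: "v UNIV - v (UNIV - {i}) < p i"
  obtains j where "j \<notin> S"
    and "\<And>y T. y < v UNIV - v (UNIV - {j}) + (p i - (v UNIV - v (UNIV - {i}))) \<Longrightarrow>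
           T \<in> demand v (p(j := y)) \<Longrightarrow> j \<in> T"
proof -
  have "v (insert i (S - {i})) + v (UNIV - {i}) \<le> v (S - {i}) + v UNIV \<or>
    (\<exists>y \<in> UNIV - (S - {i}) - {i}. v (insert i (S - {i})) + v (UNIV - {i}) \<le> v (insert y (S - {i})) + v (UNIV - {y}))"
    by (rule gross_substitutes_exchange[OF val gs]) auto
  moreover have "insert i (S - {i}) = S" using iS by blast
  moreover have psS: "price_sum p S = p i + price_sum p (S - {i})" using price_sum_remove[OF iS] .
  moreover have "v (S - {i}) - price_sum p (S - {i}) \<le> v S - price_sum p S" by (rule demandD[OF S])
  ultimately obtain j where jS: "j \<notin> S"
    and j: "v S + v (UNIV - {i}) \<le> v (insert j (S - {i})) + v (UNIV - {j})"
    using over by auto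
  show ?thesis
  proof (rule that[OF jS], rule ccontr)
    fix y T assume y: "y < v UNIV - v (UNIV - {j}) + (p i - (v UNIV - v (UNIV - {i})))"
      and T: "T \<in> demand v (p(j := y))" and jT: "j \<notin> T"
    have "j \<notin> S - {i}" using jS by blast
    hence "price_sum (p(j := y)) (insert j (S - {i})) = y + price_sum p (S - {i})"
      by (simp add: price_sum_insert price_sum_upd_notin)
    moreover have "v (insert j (S - {i})) - price_sum (p(j := y)) (insert j (S - {i})) \<le>
        v T - price_sum (p(j := y)) T"
      by (rule demandD[OF T])
    moreover have "v T - price_sum p T \<le> v S - price_sum p S" by (rule demandD[OF S])
    ultimately show False using price_sum_upd_notin[OF jT] j y psS by simp
  qed
qed

section \<open>Decision maps\<close>

lemma decision_mapD: "decision_map v X \<Longrightarrow> (\<And>j. 0 \<le> p j) \<Longrightarrow> X p \<in> demand v p"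
  unfolding decision_map_def by blast

lemma GS_consistentD:
  "GS_consistent X \<Longrightarrow> (\<And>j. 0 \<le> p j) \<Longrightarrow> p \<le> p' \<Longrightarrow> X p \<inter> {j. p j = p' j} \<subseteq> X p'"
  unfolding GS_consistent_def by blast

text \<open>If only i has a positive price, the grand bundle beats every bundle without i;
  GS-consistency carries the sale of i over to p.\<close>

lemma decision_sells_below_marginal:
  fixes v :: "'a::finite set \<Rightarrow> real"
  assumes val: "valuation v" and dm: "decision_map v X" and gc: "GS_consistent X"
    and nn: "\<And>j. 0 \<le> p j" and below: "p i < v UNIV - v (UNIV - {i})"
  shows "i \<in> X p"
proof -
  define q where "q j = (if j = i then p i else 0)" for j
  have qnn: "\<And>j. 0 \<le> q j" unfolding q_def using nn by simp
  have "i \<in> X q"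
  proof (rule ccontr)
    assume "i \<notin> X q"
    hence "price_sum q (X q) = 0" "v (X q) \<le> v (UNIV - {i})"
      by (auto simp: price_sum_def q_def intro!: valuation_mono[OF val])
    moreover have "price_sum q UNIV = p i"
      using price_sum_remove[of i UNIV q] by (simp add: price_sum_def q_def)
    moreover have "v UNIV - price_sum q UNIV \<le> v (X q) - price_sum q (X q)"
      by (rule demandD[OF decision_mapD[OF dm qnn]])
    ultimately show False using below by linarith
  qed
  moreover have "q \<le> p" unfolding q_def le_fun_def using nn by simp
  ultimately show ?thesis using GS_consistentD[OF gc qnn] by (fastforce simp: q_def)
qed

lemma decision_sells_at_lower_price:
  fixes v :: "'a::finite set \<Rightarrow> real"
  assumes dm: "decision_map v X" and nn: "\<And>j. 0 \<le> p j" and iX: "i \<in> X p"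
    and "0 \<le> y" and "y < p i"
  shows "i \<in> X (p(i := y))"
proof (rule ccontr)
  assume ni: "i \<notin> X (p(i := y))"
  have nn': "\<And>j. 0 \<le> (p(i := y)) j" using nn \<open>0 \<le> y\<close> by simp
  have "v (X (p(i := y))) - price_sum p (X (p(i := y))) \<le> v (X p) - price_sum p (X p)"
    and "v (X p) - price_sum (p(i := y)) (X p) \<le>
      v (X (p(i := y))) - price_sum (p(i := y)) (X (p(i := y)))"
    by (rule demandD[OF decision_mapD[OF dm nn]], rule demandD[OF decision_mapD[OF dm nn']])
  moreover have "price_sum (p(i := y)) (X (p(i := y))) = price_sum p (X (p(i := y)))"
    by (rule price_sum_upd_notin[OF ni])
  moreover have "price_sum p (X p) = p i + price_sum p (X p - {i})"
    and "price_sum (p(i := y)) (X p) = y + price_sum p (X p - {i})"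
    using price_sum_remove[OF iX] price_sum_upd_notin[of i "X p - {i}" p y] by simp_all
  ultimately show False using \<open>y < p i\<close> by linarith
qed

lemma decision_price_le_value:
  fixes v :: "'a::finite set \<Rightarrow> real"
  assumes val: "valuation v" and dm: "decision_map v X" and nn: "\<And>j. 0 \<le> p j" and iX: "i \<in> X p"
  shows "p i \<le> v UNIV"
proof -
  have "v (X p - {i}) - price_sum p (X p - {i}) \<le> v (X p) - price_sum p (X p)"
    by (rule demandD[OF decision_mapD[OF dm nn]])
  moreover have "price_sum p (X p) = p i + price_sum p (X p - {i})" by (rule price_sum_remove[OF iX])
  moreover have "v (X p) \<le> v UNIV" by (rule valuation_mono[OF val]) simp
  moreover have "0 \<le> v (X p - {i})" by (rule valuation_nonneg[OF val])
  ultimately show ?thesis by linarith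
qed

section \<open>The pricing game\<close>

lemma finite_sum_ge_imp_uniform_term:
  fixes f :: "'j \<Rightarrow> real \<Rightarrow> real"
  assumes "finite J" and "0 < b" and "0 < E"
    and sum: "\<And>\<delta>. 0 < \<delta> \<Longrightarrow> \<delta> < E \<Longrightarrow> b \<le> (\<Sum>j\<in>J. f j \<delta>)"
    and mono: "\<And>j \<delta> \<delta>'. j \<in> J \<Longrightarrow> 0 < \<delta> \<Longrightarrow> \<delta> \<le> \<delta>' \<Longrightarrow> \<delta>' < E \<Longrightarrow> f j \<delta> \<le> f j \<delta>'"
  obtains j where "j \<in> J" and "\<And>\<delta>. 0 < \<delta> \<Longrightarrow> \<delta> < E \<Longrightarrow> b / card J \<le> f j \<delta>"
proof (rule ccontr)
  assume "\<not> thesis"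
  hence "\<forall>j\<in>J. \<exists>\<delta>. 0 < \<delta> \<and> \<delta> < E \<and> f j \<delta> < b / card J"
    using that by (meson not_le)
  then obtain d where d: "\<And>j. j \<in> J \<Longrightarrow> 0 < d j \<and> d j < E \<and> f j (d j) < b / card J"
    by metis
  define \<delta> where "\<delta> = Min (insert (E / 2) (d ` J))"
  have "\<delta> \<le> E / 2" unfolding \<delta>_def using \<open>finite J\<close> by (intro Min.coboundedI) auto
  hence \<delta>: "0 < \<delta>" "\<delta> < E" "\<And>j. j \<in> J \<Longrightarrow> \<delta> \<le> d j"
    using d \<open>finite J\<close> \<open>0 < E\<close> unfolding \<delta>_def by (auto simp: Min_gr_iff intro: Min.coboundedI)
  have "J \<noteq> {}" using sum[OF \<delta>(1,2)] \<open>0 < b\<close> by auto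
  have "b \<le> (\<Sum>j\<in>J. f j \<delta>)" by (rule sum[OF \<delta>(1,2)])
  also have "\<dots> < (\<Sum>j\<in>J. b / card J)"
  proof (rule sum_strict_mono)
    show "f j \<delta> < b / card J" if "j \<in> J" for j
      using mono[OF that \<delta>(1) \<delta>(3)[OF that]] d[OF that] by linarith
  qed (use \<open>finite J\<close> \<open>J \<noteq> {}\<close> in auto)
  also have "\<dots> = b" using \<open>finite J\<close> \<open>J \<noteq> {}\<close> by simp
  finally show False by simp
qed

text \<open>An atom of weight a at price t and an extra probability c of selling just
  below t make a small undercut profitable.\<close>

lemma undercut_profitable:
  fixes t a c V E :: real
  assumes "0 < t" "0 < c" "0 < E" "a \<le> 1" "c \<le> 1" "V \<le> t * a"
    and undercut: "\<And>\<delta>. 0 < \<delta> \<Longrightarrow> \<delta> < E \<Longrightarrow> (t - \<delta>) * (a + c) \<le> V"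
  shows False
proof -
  define \<delta> where "\<delta> = min (E / 2) (t * c / 4)"
  have "0 < \<delta>" "\<delta> < E" "\<delta> \<le> t * c / 4" using assms unfolding \<delta>_def by auto
  hence "t * c \<le> \<delta> * (a + c)" using undercut[of \<delta>] assms(6) by (simp add: algebra_simps)
  also have "\<dots> \<le> \<delta> * 2" using assms \<open>0 < \<delta>\<close> by (simp add: mult_left_mono)
  moreover have "0 < t * c" using assms(1,2) by simp
  ultimately show False using \<open>\<delta> \<le> t * c / 4\<close> by linarith
qed

locale pricing_game =
  fixes v :: "'a::finite set \<Rightarrow> real" and X :: "('a \<Rightarrow> real) \<Rightarrow> 'a set"
    and M :: "'a \<Rightarrow> real measure"
  assumes val: "valuation v" and gs: "gross_substitutes v" and dm: "decision_map v X"
    and gc: "GS_consistent X" and NE: "mixed_NE X M"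
begin

abbreviation P :: "('a \<Rightarrow> real) measure" where "P \<equiv> PiM UNIV M"

abbreviation pr :: "('a \<Rightarrow> real) set \<Rightarrow> real" where "pr A \<equiv> measure P A"

definition payoff :: "'a \<Rightarrow> ennreal" where
  "payoff i = (\<integral>\<^sup>+ p. ennreal (seller_utility X i p) \<partial>P)"

definition deviation_payoff :: "'a \<Rightarrow> real \<Rightarrow> ennreal" where
  "deviation_payoff i y = (\<integral>\<^sup>+ p. ennreal (seller_utility X i (p(i := y))) \<partial>P)"

definition marg :: "'a \<Rightarrow> real" where
  "marg i = marginal v {i} (UNIV - {i})"

lemma marg_eq: "marg i = v UNIV - v (UNIV - {i})"
  unfolding marg_def marginal_def by (simp add: insert_absorb)

lemma marg_nonneg: "0 \<le> marg i"
  unfolding marg_eq using valuation_mono[OF val, of "UNIV - {i}" UNIV] by simp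

lemma M_prob_space: "prob_space (M i)" and sets_M: "sets (M i) = sets borel"
  and AE_M_nonneg: "AE x in M i. 0 \<le> x"
  using NE unfolding mixed_NE_def by blast+

lemma space_M: "space (M i) = UNIV"
  using sets_eq_imp_space_eq[OF sets_M] by simp

lemma utility_measurable [measurable]: "(\<lambda>p. seller_utility X i p) \<in> borel_measurable P"
  using NE unfolding mixed_NE_def by blast

lemma deviation_utility_measurable:
  "0 \<le> y \<Longrightarrow> (\<lambda>p. seller_utility X i (p(i := y))) \<in> borel_measurable P"
  using NE unfolding mixed_NE_def by blast

lemma deviation_payoff_le_payoff: "0 \<le> y \<Longrightarrow> deviation_payoff i y \<le> payoff i"
  unfolding deviation_payoff_def payoff_def using NE unfolding mixed_NE_def by blast

sublocale PS: product_prob_space M UNIV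
  by (intro product_prob_space.intro product_sigma_finite.intro product_prob_space_axioms.intro
      prob_space_imp_sigma_finite M_prob_space)

lemma space_P: "space P = UNIV"
  unfolding space_PiM space_M by simp

lemma component_measurable [measurable]: "(\<lambda>p. p j) \<in> borel_measurable P"
proof -
  have "(\<lambda>p. p j) \<in> measurable P (M j)" by (rule measurable_component_singleton) simp
  also have "measurable P (M j) = measurable P borel" by (rule measurable_cong_sets[OF refl sets_M])
  finally show ?thesis .
qed

lemma component_sets [measurable]: "I \<in> sets borel \<Longrightarrow> {p. p i \<in> I} \<in> sets P"
  using measurable_sets[OF component_measurable] by (simp add: space_P vimage_def)

lemma component_eq_sets [measurable]: "{p. p i = t} \<in> sets P"
  using component_sets[of "{t}" i] by simp

lemma fun_upd_measurable [measurable]: "(\<lambda>p. p(i := y)) \<in> measurable P P"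
proof -
  have "(\<lambda>p. (id p)(i := (\<lambda>_. y) p)) \<in> measurable P P"
    by (rule measurable_fun_upd[where J=UNIV]) (auto simp: space_M)
  thus ?thesis by simp
qed

lemma AE_component: "(AE x in M i. Q x) \<Longrightarrow> AE p in P. Q (p i)"
  by (rule AE_PiM_component[where I=UNIV]) (auto intro: M_prob_space)

definition nonneg_prices :: "('a \<Rightarrow> real) set" where
  "nonneg_prices = {p. \<forall>j. 0 \<le> p j}"

lemma nonneg_prices_sets [measurable]: "nonneg_prices \<in> sets P"
proof -
  have "nonneg_prices = (\<Inter>j. {p. p j \<in> {0..}})" unfolding nonneg_prices_def by auto
  also have "\<dots> \<in> sets P" by (intro sets.finite_INT component_sets) auto
  finally show ?thesis .
qed

lemma AE_nonneg_prices: "AE p in P. p \<in> nonneg_prices"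
proof -
  have "AE p in P. \<forall>j\<in>UNIV. 0 \<le> p j"
    by (rule AE_finite_allI) (auto intro: AE_component AE_M_nonneg)
  thus ?thesis unfolding nonneg_prices_def by simp
qed

lemma nn_integral_fun_upd:
  assumes [measurable]: "g \<in> borel_measurable P"
  shows "(\<integral>\<^sup>+ p. g (p(i := y)) \<partial>P) = (\<integral>\<^sup>+ x. g (x(i := y)) \<partial>PiM (UNIV - {i}) M)"
proof -
  have I: "insert i (UNIV - {i}) = UNIV" by auto
  have "(\<lambda>p. g (p(i := y))) \<in> borel_measurable (PiM (insert i (UNIV - {i})) M)"
    unfolding I by measurable
  hence "(\<integral>\<^sup>+ p. g (p(i := y)) \<partial>P) =
      (\<integral>\<^sup>+ z. (\<integral>\<^sup>+ x. g ((x(i := z))(i := y)) \<partial>PiM (UNIV - {i}) M) \<partial>M i)"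
    using PS.product_nn_integral_insert_rev[of "UNIV - {i}" i] unfolding I by simp
  also have "\<dots> = (\<integral>\<^sup>+ x. g (x(i := y)) \<partial>PiM (UNIV - {i}) M)"
    using prob_space.emeasure_space_1[OF M_prob_space] by (simp add: nn_integral_const)
  finally show ?thesis .
qed

lemma nn_integral_P_split:
  assumes [measurable]: "g \<in> borel_measurable P"
  shows "integral\<^sup>N P g = (\<integral>\<^sup>+ y. (\<integral>\<^sup>+ p. g (p(i := y)) \<partial>P) \<partial>M i)"
proof -
  have I: "insert i (UNIV - {i}) = UNIV" by auto
  have "g \<in> borel_measurable (PiM (insert i (UNIV - {i})) M)" unfolding I by simp
  hence "integral\<^sup>N P g = (\<integral>\<^sup>+ y. (\<integral>\<^sup>+ x. g (x(i := y)) \<partial>PiM (UNIV - {i}) M) \<partial>M i)"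
    using PS.product_nn_integral_insert_rev[of "UNIV - {i}" i g] unfolding I by simp
  thus ?thesis by (simp add: nn_integral_fun_upd)
qed

lemma deviation_payoff_measurable [measurable]: "deviation_payoff i \<in> borel_measurable (M i)"
proof -
  interpret SF: sigma_finite_measure "PiM (UNIV - {i}) M"
    by (intro product_sigma_finite.sigma_finite product_sigma_finite.intro
        prob_space_imp_sigma_finite M_prob_space) simp
  have "(\<lambda>z. (snd z)(i := fst z)) \<in> measurable (M i \<Otimes>\<^sub>M PiM (UNIV - {i}) M) P"
    by (rule measurable_fun_upd[where J="UNIV - {i}"]) auto
  hence "(\<lambda>(y, x). ennreal (seller_utility X i (x(i := y)))) \<in>
      borel_measurable (M i \<Otimes>\<^sub>M PiM (UNIV - {i}) M)"
    using measurable_comp[OF _ utility_measurable] by (simp add: comp_def case_prod_beta')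
  hence "(\<lambda>y. \<integral>\<^sup>+ x. ennreal (seller_utility X i (x(i := y))) \<partial>PiM (UNIV - {i}) M) \<in> borel_measurable (M i)"
    by (rule SF.borel_measurable_nn_integral)
  thus ?thesis unfolding deviation_payoff_def by (subst nn_integral_fun_upd) simp_all
qed

lemma nn_integral_component_indep:
  assumes [measurable]: "I \<in> sets borel" "h \<in> borel_measurable P"
    and indep: "\<And>p y. h (p(i := y)) = h p"
  shows "(\<integral>\<^sup>+ p. indicator {p. p i \<in> I} p * h p \<partial>P) = emeasure (M i) I * integral\<^sup>N P h"
proof -
  have "(\<integral>\<^sup>+ p. indicator {p. p i \<in> I} p * h p \<partial>P) =
      (\<integral>\<^sup>+ y. (\<integral>\<^sup>+ p. indicator {p. p i \<in> I} (p(i := y)) * h (p(i := y)) \<partial>P) \<partial>M i)"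
    by (rule nn_integral_P_split) measurable
  also have "\<dots> = (\<integral>\<^sup>+ y. integral\<^sup>N P h * indicator I y \<partial>M i)"
    by (intro nn_integral_cong) (auto simp: indicator_def indep)
  also have "\<dots> = integral\<^sup>N P h * emeasure (M i) I"
    by (rule nn_integral_cmult_indicator) (simp add: sets_M)
  finally show ?thesis by (simp add: mult.commute)
qed

lemma nn_integral_component_utility:
  assumes [measurable]: "I \<in> sets borel"
  shows "(\<integral>\<^sup>+ p. indicator {p. p i \<in> I} p * ennreal (seller_utility X i p) \<partial>P) =
    (\<integral>\<^sup>+ y. indicator I y * deviation_payoff i y \<partial>M i)"
proof -
  have "(\<integral>\<^sup>+ p. indicator {p. p i \<in> I} p * ennreal (seller_utility X i p) \<partial>P) =
      (\<integral>\<^sup>+ y. (\<integral>\<^sup>+ p. indicator {p. p i \<in> I} (p(i := y)) * ennreal (seller_utility X i (p(i := y))) \<partial>P) \<partial>M i)"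
    by (rule nn_integral_P_split) measurable
  also have "\<dots> = (\<integral>\<^sup>+ y. indicator I y * deviation_payoff i y \<partial>M i)"
    by (intro nn_integral_cong) (auto simp: indicator_def deviation_payoff_def)
  finally show ?thesis .
qed

lemma payoff_le_value: "payoff i \<le> ennreal (v UNIV)"
proof -
  have bound: "AE p in P. seller_utility X i p \<le> v UNIV"
    using AE_nonneg_prices
  proof eventually_elim
    case (elim p)
    thus ?case using decision_price_le_value[OF val dm] valuation_nonneg[OF val, of UNIV]
      by (auto simp: seller_utility_def nonneg_prices_def)
  qed
  hence "payoff i \<le> (\<integral>\<^sup>+ p. ennreal (v UNIV) \<partial>P)"
    unfolding payoff_def using bound by (intro nn_integral_mono_AE) (auto elim!: eventually_mono intro: ennreal_leI)
  also have "\<dots> = ennreal (v UNIV)" by (simp add: PS.P.emeasure_space_1 nn_integral_const)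
  finally show ?thesis .
qed

lemma payoff_less_top: "payoff i < \<top>"
  using payoff_le_value[of i] by (metis ennreal_less_top le_less_trans)

text \<open>Outside I the deviation payoffs are at most payoff i, so a share of at least
  emeasure (M i) I of payoff i has to be earned on I.\<close>

lemma payoff_mult_measure_le:
  assumes [measurable]: "I \<in> sets borel"
  shows "payoff i * emeasure (M i) I \<le> (\<integral>\<^sup>+ y. indicator I y * deviation_payoff i y \<partial>M i)"
proof -
  have [measurable]: "I \<in> sets (M i)" "- I \<in> sets (M i)" using sets_M by auto
  define A where "A = (\<integral>\<^sup>+ y. indicator I y * deviation_payoff i y \<partial>M i)"
  define B where "B = (\<integral>\<^sup>+ y. indicator (- I) y * deviation_payoff i y \<partial>M i)"
  have "payoff i = (\<integral>\<^sup>+ y. deviation_payoff i y \<partial>M i)"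
    using nn_integral_component_utility[of UNIV i] unfolding payoff_def by simp
  also have "\<dots> = (\<integral>\<^sup>+ y. indicator I y * deviation_payoff i y + indicator (- I) y * deviation_payoff i y \<partial>M i)"
    by (rule nn_integral_cong) (simp add: indicator_def)
  also have "\<dots> = A + B" unfolding A_def B_def by (rule nn_integral_add) measurable
  finally have AB: "payoff i = A + B" .
  have "B \<le> (\<integral>\<^sup>+ y. payoff i * indicator (- I) y \<partial>M i)" unfolding B_def
    by (rule nn_integral_mono_AE) (use AE_M_nonneg[of i] in \<open>eventually_elim, auto simp: indicator_def intro: deviation_payoff_le_payoff\<close>)
  also have "\<dots> = payoff i * emeasure (M i) (- I)"
    by (rule nn_integral_cmult_indicator) (simp add: sets_M)
  finally have B: "B \<le> payoff i * emeasure (M i) (- I)" .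
  have "emeasure (M i) I + emeasure (M i) (- I) = emeasure (M i) (I \<union> - I)"
    by (rule plus_emeasure) (auto simp: sets_M)
  also have "\<dots> = 1" using prob_space.emeasure_space_1[OF M_prob_space, of i] space_M by simp
  finally have "payoff i * emeasure (M i) I + payoff i * emeasure (M i) (- I) = payoff i"
    by (metis distrib_left mult.right_neutral)
  also have "\<dots> = A + B" by (rule AB)
  also have "\<dots> \<le> A + payoff i * emeasure (M i) (- I)" using B by (simp add: add_left_mono)
  finally have le: "payoff i * emeasure (M i) I + payoff i * emeasure (M i) (- I) \<le>
      A + payoff i * emeasure (M i) (- I)" .
  have "emeasure (M i) (- I) \<noteq> \<top>" "payoff i \<noteq> \<top>"
    using PS.M.emeasure_finite payoff_less_top[of i] by auto
  hence "payoff i * emeasure (M i) (- I) \<noteq> \<top>" by (simp add: ennreal_mult_eq_top_iff)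
  with le show ?thesis unfolding A_def
    using ennreal_add_left_cancel_le[of "payoff i * emeasure (M i) (- I)"] by (simp add: add.commute)
qed

definition rpayoff :: "'a \<Rightarrow> real" where
  "rpayoff i = enn2real (payoff i)"

lemma payoff_eq: "payoff i = ennreal (rpayoff i)"
  unfolding rpayoff_def using payoff_less_top[of i] by simp

lemma rpayoff_nonneg: "0 \<le> rpayoff i"
  unfolding rpayoff_def by simp

lemma rpayoff_pos_iff: "0 < rpayoff i \<longleftrightarrow> payoff i \<noteq> 0"
  unfolding payoff_eq using rpayoff_nonneg[of i] by auto

definition sells_at :: "'a \<Rightarrow> real \<Rightarrow> ('a \<Rightarrow> real) set" where
  "sells_at i y = {p. 0 < seller_utility X i (p(i := y))}"

lemma sells_at_sets [measurable]: "0 \<le> y \<Longrightarrow> sells_at i y \<in> sets P"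
proof -
  assume "0 \<le> y"
  note [measurable] = deviation_utility_measurable[OF this]
  have "sells_at i y = {p \<in> space P. 0 < seller_utility X i (p(i := y))}"
    unfolding sells_at_def space_P by simp
  also have "\<dots> \<in> sets P" by measurable
  finally show ?thesis .
qed

lemma sells_at_iff: "0 < y \<Longrightarrow> p \<in> sells_at i y \<longleftrightarrow> i \<in> X (p(i := y))"
  unfolding sells_at_def seller_utility_def by auto

lemma deviation_payoff_eq: "0 < y \<Longrightarrow> deviation_payoff i y = ennreal (y * pr (sells_at i y))"
proof -
  assume y: "0 < y"
  have "deviation_payoff i y = (\<integral>\<^sup>+ p. ennreal y * indicator (sells_at i y) p \<partial>P)"
    unfolding deviation_payoff_def
    by (rule nn_integral_cong) (auto simp: sells_at_def seller_utility_def indicator_def y)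
  also have "\<dots> = ennreal y * emeasure P (sells_at i y)"
    by (rule nn_integral_cmult_indicator) (use y in simp)
  also have "\<dots> = ennreal (y * pr (sells_at i y))"
    using y by (simp add: PS.P.emeasure_eq_measure ennreal_mult)
  finally show ?thesis .
qed

lemma deviation_gain_le: "0 < y \<Longrightarrow> y * pr (sells_at i y) \<le> rpayoff i"
  using deviation_payoff_le_payoff[of y i] deviation_payoff_eq[of y i] payoff_eq[of i] rpayoff_nonneg[of i]
  by (simp add: ennreal_le_iff)

lemma AE_not_sells_at:
  assumes "\<not> 0 < rpayoff i" and y: "0 < y"
  shows "AE p in P. p \<notin> sells_at i y"
proof -
  have "y * pr (sells_at i y) \<le> 0" using deviation_gain_le[OF y, of i] assms(1) by simp
  hence "pr (sells_at i y) = 0" using y by (simp add: mult_le_0_iff measure_le_0_iff)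
  thus ?thesis using PS.P.prob_eq_0[OF sells_at_sets[of y i]] y by simp
qed

lemma sells_at_mono:
  assumes "p \<in> nonneg_prices" and "p \<in> sells_at i y" and "0 < y'" and "y' \<le> y"
  shows "p \<in> sells_at i y'"
proof (cases "y' = y")
  case False
  hence "y' < y" "0 < y" using assms(3,4) by simp_all
  moreover have "\<And>j. 0 \<le> (p(i := y)) j" using assms(1) \<open>0 < y\<close> by (simp add: nonneg_prices_def)
  ultimately have "i \<in> X ((p(i := y))(i := y'))"
    using assms(2,3) sells_at_iff decision_sells_at_lower_price[OF dm] by (metis fun_upd_same less_imp_le)
  thus ?thesis using sells_at_iff[OF assms(3)] by simp
qed (use assms in simp)

lemma utility_pos_sets [measurable]: "{p. 0 < seller_utility X i p} \<in> sets P"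
proof -
  have "{p. 0 < seller_utility X i p} = {p \<in> space P. 0 < seller_utility X i p}" unfolding space_P by simp
  also have "\<dots> \<in> sets P" by measurable
  finally show ?thesis .
qed

lemma utility_pos_iff: "0 < p i \<Longrightarrow> 0 < seller_utility X i p \<longleftrightarrow> i \<in> X p"
  unfolding seller_utility_def by auto

lemma emeasure_M: "emeasure (M i) I = ennreal (measure (M i) I)"
  by (rule PS.M.emeasure_eq_measure)

lemma AE_M_le_iff: "(AE x in M i. x \<le> c) \<longleftrightarrow> measure (M i) {x. c < x} = 0"
proof -
  have "{x. c < x} \<in> sets (M i)" using sets_M by simp
  thus ?thesis using PS.M.prob_eq_0 by (auto elim!: eventually_mono simp: not_less)
qed

lemma prob_component:
  assumes [measurable]: "I \<in> sets borel"
  shows "pr {p. p i \<in> I} = measure (M i) I"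
proof -
  have "emeasure P {p. p i \<in> I} = (\<integral>\<^sup>+ p. indicator {p. p i \<in> I} p * 1 \<partial>P)" by simp
  also have "\<dots> = emeasure (M i) I"
    by (subst nn_integral_component_indep) (auto simp: PS.P.emeasure_space_1)
  finally show ?thesis unfolding PS.P.emeasure_eq_measure emeasure_M by simp
qed

lemma prob_components:
  assumes "i \<noteq> j" and [measurable]: "I \<in> sets borel" "J \<in> sets borel"
  shows "pr ({p. p i \<in> I} \<inter> {p. p j \<in> J}) = measure (M i) I * measure (M j) J"
proof -
  have "emeasure P ({p. p i \<in> I} \<inter> {p. p j \<in> J}) =
      (\<integral>\<^sup>+ p. indicator {p. p i \<in> I} p * indicator {p. p j \<in> J} p \<partial>P)"
    by (rule nn_integral_indicator[symmetric, THEN trans]) (auto simp: space_P indicator_inter_arith)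
  also have "\<dots> = emeasure (M i) I * (\<integral>\<^sup>+ p. indicator {p. p j \<in> J} p \<partial>P)"
    using \<open>i \<noteq> j\<close> by (intro nn_integral_component_indep) (auto simp: indicator_def)
  also have "\<dots> = emeasure (M i) I * emeasure P {p. p j \<in> J}"
    by (simp add: space_P[symmetric])
  finally show ?thesis
    unfolding PS.P.emeasure_eq_measure emeasure_M prob_component[OF assms(3)]
    by (simp add: ennreal_mult[symmetric])
qed

lemma rpayoff_le_atom:
  assumes t: "0 < t" and atom: "0 < measure (M i) {t}"
  shows "rpayoff i \<le> t * pr (sells_at i t)"
proof -
  have "payoff i * emeasure (M i) {t} \<le> (\<integral>\<^sup>+ y. indicator {t} y * deviation_payoff i y \<partial>M i)"
    by (rule payoff_mult_measure_le) simp
  also have "\<dots> = (\<integral>\<^sup>+ y. deviation_payoff i t * indicator {t} y \<partial>M i)"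
    by (rule nn_integral_cong) (simp add: indicator_def)
  also have "\<dots> = deviation_payoff i t * emeasure (M i) {t}"
    by (rule nn_integral_cmult_indicator) (simp add: sets_M)
  finally have "ennreal (rpayoff i * measure (M i) {t}) \<le> ennreal (t * pr (sells_at i t) * measure (M i) {t})"
    unfolding payoff_eq emeasure_M deviation_payoff_eq[OF t] using t
    by (simp add: ennreal_mult[symmetric] rpayoff_nonneg)
  hence "rpayoff i * measure (M i) {t} \<le> t * pr (sells_at i t) * measure (M i) {t}"
    using t by (subst (asm) ennreal_le_iff) auto
  thus ?thesis using atom by simp
qed

lemma rpayoff_mult_measure_le_sales:
  assumes [measurable]: "I \<in> sets borel" and "0 \<le> c" and bound: "AE p in P. p i \<in> I \<longrightarrow> p i \<le> c"
  shows "rpayoff i * measure (M i) I \<le> c * pr ({p. p i \<in> I} \<inter> {p. 0 < seller_utility X i p})"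
proof -
  define Q where "Q = {p. p i \<in> I} \<inter> {p. 0 < seller_utility X i p}"
  have [measurable]: "Q \<in> sets P" unfolding Q_def by simp
  have "payoff i * emeasure (M i) I \<le> (\<integral>\<^sup>+ y. indicator I y * deviation_payoff i y \<partial>M i)"
    by (rule payoff_mult_measure_le) simp
  also have "\<dots> = (\<integral>\<^sup>+ p. indicator {p. p i \<in> I} p * ennreal (seller_utility X i p) \<partial>P)"
    by (rule nn_integral_component_utility[symmetric]) simp
  also have "\<dots> \<le> (\<integral>\<^sup>+ p. ennreal c * indicator Q p \<partial>P)"
    using bound
    by (intro nn_integral_mono_AE) (auto elim!: eventually_mono simp: Q_def indicator_def seller_utility_def ennreal_leI ennreal_neg)
  also have "\<dots> = ennreal c * emeasure P Q" by (rule nn_integral_cmult_indicator) simp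
  finally have "ennreal (rpayoff i * measure (M i) I) \<le> ennreal (c * pr Q)"
    unfolding payoff_eq emeasure_M PS.P.emeasure_eq_measure using \<open>0 \<le> c\<close>
    by (simp add: ennreal_mult[symmetric] rpayoff_nonneg)
  thus ?thesis unfolding Q_def using \<open>0 \<le> c\<close> by (subst (asm) ennreal_le_iff) auto
qed

lemma decision_overpriced_rival:
  assumes nn: "\<And>j. 0 \<le> p j" and kX: "k \<in> X p" and k: "marg k + l \<le> p k" and l: "0 < l"
  obtains j where "j \<notin> X p" and "marg j + l \<le> p j"
    and "\<And>y. 0 \<le> y \<Longrightarrow> y < marg j + l \<Longrightarrow> j \<in> X (p(j := y))"
proof -
  have "v UNIV - v (UNIV - {k}) < p k" using k l by (simp add: marg_eq)
  then obtain j where jX: "j \<notin> X p" and demanded: "\<And>y T.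
      y < v UNIV - v (UNIV - {j}) + (p k - (v UNIV - v (UNIV - {k}))) \<Longrightarrow>
      T \<in> demand v (p(j := y)) \<Longrightarrow> j \<in> T"
    using demand_overpriced_rival[OF val gs decision_mapD[OF dm nn] kX] by blast
  have sells: "j \<in> X (p(j := y))" if "0 \<le> y" "y < marg j + l" for y
  proof -
    have "\<And>i. 0 \<le> (p(j := y)) i" using nn that by simp
    moreover have "y < v UNIV - v (UNIV - {j}) + (p k - (v UNIV - v (UNIV - {k})))"
      using that k by (simp add: marg_eq)
    ultimately show ?thesis using demanded decision_mapD[OF dm] by blast
  qed
  moreover have "marg j + l \<le> p j"
  proof (rule ccontr)
    assume "\<not> marg j + l \<le> p j"
    hence "j \<in> X (p(j := p j))" using sells[of "p j"] nn[of j] by (simp add: not_le)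
    thus False using jX by simp
  qed
  ultimately show ?thesis using that jX by blast
qed

text \<open>The rival provided by the exchange property is active: an inactive seller sells at
  any positive price with probability zero.\<close>

lemma AE_rival:
  assumes l: "0 < l"
  shows "AE p in P. \<forall>k. k \<in> X p \<longrightarrow> marg k + l \<le> p k \<longrightarrow>
    (\<exists>j. j \<notin> X p \<and> 0 < rpayoff j \<and> marg j + l \<le> p j \<and>
         (\<forall>y. 0 \<le> y \<longrightarrow> y < marg j + l \<longrightarrow> j \<in> X (p(j := y))))"
proof -
  have "AE p in P. \<forall>j\<in>UNIV. \<not> 0 < rpayoff j \<longrightarrow> p \<notin> sells_at j (l / 2)"
    by (rule AE_finite_allI) (use l AE_not_sells_at in \<open>auto intro: AE_I2\<close>)
  with AE_nonneg_prices show ?thesis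
  proof eventually_elim
    case (elim p)
    hence nn: "\<And>j. 0 \<le> p j" by (simp add: nonneg_prices_def)
    show ?case
    proof (intro allI impI)
      fix k assume k: "k \<in> X p" "marg k + l \<le> p k"
      obtain j where j: "j \<notin> X p" "marg j + l \<le> p j"
        and sells: "\<And>y. 0 \<le> y \<Longrightarrow> y < marg j + l \<Longrightarrow> j \<in> X (p(j := y))"
        using decision_overpriced_rival[of p k l, OF nn k l] by blast
      have "p \<in> sells_at j (l / 2)"
        using sells[of "l / 2"] sells_at_iff[of "l / 2"] l marg_nonneg[of j] by simp
      hence "0 < rpayoff j" using elim by blast
      thus "\<exists>j. j \<notin> X p \<and> 0 < rpayoff j \<and> marg j + l \<le> p j \<and>
          (\<forall>y. 0 \<le> y \<longrightarrow> y < marg j + l \<longrightarrow> j \<in> X (p(j := y)))"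
        using j sells by blast
    qed
  qed
qed

lemma marg_le_rpayoff: "marg i \<le> rpayoff i"
proof (cases "0 < marg i")
  case True
  show ?thesis
  proof (rule dense_le_bounded[OF True])
    fix w assume w: "0 < w" "w < marg i"
    have "AE p in P. p \<in> sells_at i w"
      using AE_nonneg_prices
    proof eventually_elim
      case (elim p)
      hence "\<And>j. 0 \<le> (p(i := w)) j" using w by (simp add: nonneg_prices_def)
      hence "i \<in> X (p(i := w))"
        using w decision_sells_below_marginal[OF val dm gc] by (simp add: marg_eq)
      thus ?case using sells_at_iff[OF w(1)] by simp
    qed
    hence "pr (sells_at i w) = 1" using PS.P.prob_eq_1[OF sells_at_sets[of w i]] w by simp
    thus "w \<le> rpayoff i" using deviation_gain_le[OF w(1), of i] by simp
  qed
qed (use rpayoff_nonneg[of i] in simp)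

lemma AE_price_le_value:
  assumes "0 < rpayoff i"
  shows "AE x in M i. x \<le> v UNIV"
proof -
  define I where "I = {x::real. v UNIV < x}"
  have [measurable]: "I \<in> sets borel" unfolding I_def by measurable
  have zero: "deviation_payoff i y = 0" if "y \<in> I" for y
  proof -
    have y: "0 < y" using that valuation_nonneg[OF val, of UNIV] unfolding I_def by simp
    have "AE p in P. p \<notin> sells_at i y"
      using AE_nonneg_prices
    proof eventually_elim
      case (elim p)
      hence nn: "\<And>j. 0 \<le> (p(i := y)) j" using y by (simp add: nonneg_prices_def)
      show ?case
      proof
        assume "p \<in> sells_at i y"
        hence "i \<in> X (p(i := y))" using sells_at_iff[OF y] by blast
        hence "(p(i := y)) i \<le> v UNIV" by (rule decision_price_le_value[OF val dm nn])
        thus False using that unfolding I_def by simp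
      qed
    qed
    hence "pr (sells_at i y) = 0" using PS.P.prob_eq_0[OF sells_at_sets[of y i]] y by simp
    thus ?thesis using deviation_payoff_eq[OF y] by simp
  qed
  have "payoff i * emeasure (M i) I \<le> (\<integral>\<^sup>+ y. indicator I y * deviation_payoff i y \<partial>M i)"
    by (rule payoff_mult_measure_le) simp
  also have "\<dots> = (\<integral>\<^sup>+ y. 0 \<partial>M i)" by (rule nn_integral_cong) (simp add: indicator_def zero)
  finally have "payoff i * emeasure (M i) I \<le> 0" by simp
  hence "measure (M i) I = 0" using assms
    unfolding payoff_eq emeasure_M by (simp add: ennreal_mult[symmetric] rpayoff_nonneg)
  thus ?thesis unfolding AE_M_le_iff I_def .
qed

definition missed_sale :: "'a \<Rightarrow> real \<Rightarrow> real \<Rightarrow> ('a \<Rightarrow> real) set" where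
  "missed_sale j t \<delta> = {p. p j = t} \<inter> {p. \<not> 0 < seller_utility X j p} \<inter> sells_at j (t - \<delta>) \<inter> nonneg_prices"

lemma missed_sale_sets [measurable]: "\<delta> \<le> t \<Longrightarrow> missed_sale j t \<delta> \<in> sets P"
proof -
  assume "\<delta> \<le> t"
  have "{p. \<not> 0 < seller_utility X j p} = space P - {p. 0 < seller_utility X j p}" by (auto simp: space_P)
  hence "{p. \<not> 0 < seller_utility X j p} \<in> sets P" by simp
  thus ?thesis unfolding missed_sale_def using \<open>\<delta> \<le> t\<close> by (intro sets.Int) simp_all
qed

lemma missed_sale_mono:
  "0 < \<delta> \<Longrightarrow> \<delta> \<le> \<delta>' \<Longrightarrow> \<delta>' < t \<Longrightarrow> missed_sale j t \<delta> \<subseteq> missed_sale j t \<delta>'"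
  unfolding missed_sale_def by (auto intro: sells_at_mono)

text \<open>On missed_sale j t \<delta> seller j does not sell at price t, whereas on sells_at j t
  it does: undercutting to t - \<delta> wins both.\<close>

lemma undercut_gain:
  assumes "0 < \<delta>" "\<delta> < t"
  shows "(t - \<delta>) * (pr (sells_at j t) + pr (missed_sale j t \<delta>)) \<le> rpayoff j"
proof -
  have [measurable]: "sells_at j t \<in> sets P" "sells_at j (t - \<delta>) \<in> sets P" using assms by simp_all
  have "(sells_at j t \<inter> nonneg_prices) \<inter> missed_sale j t \<delta> = {}"
    unfolding missed_sale_def sells_at_def by auto
  hence "pr (sells_at j t \<inter> nonneg_prices) + pr (missed_sale j t \<delta>) =
      pr ((sells_at j t \<inter> nonneg_prices) \<union> missed_sale j t \<delta>)"
    using assms by (intro PS.P.finite_measure_Union[symmetric]) auto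
  also have "\<dots> \<le> pr (sells_at j (t - \<delta>))"
    using assms by (intro PS.P.finite_measure_mono) (auto simp: missed_sale_def intro: sells_at_mono)
  finally have "pr (sells_at j t) + pr (missed_sale j t \<delta>) \<le> pr (sells_at j (t - \<delta>))"
    using AE_nonneg_prices by (subst (asm) measure_eq_AE[where B="sells_at j t"]) (auto elim: eventually_mono)
  hence "(t - \<delta>) * (pr (sells_at j t) + pr (missed_sale j t \<delta>)) \<le> (t - \<delta>) * pr (sells_at j (t - \<delta>))"
    using assms by (simp add: mult_left_mono)
  also have "\<dots> \<le> rpayoff j" using assms by (intro deviation_gain_le) simp
  finally show ?thesis .
qed

lemma measure_top_interval_tendsto:
  assumes "0 < d"
  shows "(\<lambda>n. measure (M j) {c - d / Suc n..c}) \<longlonglongrightarrow> measure (M j) {c}"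
proof -
  have "(\<lambda>n. measure (M j) {c - d / Suc n..c}) \<longlonglongrightarrow> measure (M j) (\<Inter>n. {c - d / Suc n..c})"
  proof (rule PS.M.finite_Lim_measure_decseq)
    show "decseq (\<lambda>n. {c - d / real (Suc n)..c})"
      using assms by (auto simp: decseq_def intro!: divide_left_mono)
  qed (auto simp: sets_M)
  moreover have "(\<Inter>n. {c - d / Suc n..c}) = {c}"
  proof safe
    fix x assume x: "x \<in> (\<Inter>n. {c - d / Suc n..c})"
    show "x = c"
    proof (rule ccontr)
      assume "x \<noteq> c"
      hence "0 < (c - x) / d" using x assms by auto
      then obtain n where "inverse (real (Suc n)) < (c - x) / d" using reals_Archimedean by blast
      hence "x < c - d / Suc n" using assms by (simp add: field_simps)
      moreover have "c - d / Suc n \<le> x" using INT_D[OF x, of n] by simp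
      ultimately show False by simp
    qed
  qed (use assms in auto)
  ultimately show ?thesis by simp
qed

lemma AE_le_if_null_above:
  assumes "\<And>c'. c < c' \<Longrightarrow> measure (M j) {c'..} = 0"
  shows "AE x in M j. x \<le> c"
proof -
  have "AE x in M j. \<forall>n. x < c + 1 / Suc n"
  proof (subst AE_all_countable, intro allI)
    fix n :: nat
    have "AE x in M j. x \<notin> {c + 1 / Suc n..}"
      using assms[of "c + 1 / Suc n"] by (intro PS.M.prob_eq_0[THEN iffD1]) (auto simp: sets_M)
    thus "AE x in M j. x < c + 1 / Suc n" by (auto elim: eventually_mono)
  qed
  thus ?thesis
  proof eventually_elim
    case (elim x)
    show ?case
    proof (rule ccontr)
      assume "\<not> x \<le> c"
      hence "0 < x - c" by simp
      then obtain n where "inverse (real (Suc n)) < x - c" using reals_Archimedean by blast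
      thus False using elim[rule_format, of n] by (simp add: field_simps)
    qed
  qed
qed

context
  fixes E :: real
  assumes E_pos: "0 < E"
    and price_bound: "\<And>j. 0 < rpayoff j \<Longrightarrow> AE x in M j. x \<le> marg j + E"
begin

lemma AE_active_prices_bounded: "AE p in P. \<forall>j. 0 < rpayoff j \<longrightarrow> p j \<le> marg j + E"
proof -
  have "AE p in P. \<forall>j\<in>UNIV. 0 < rpayoff j \<longrightarrow> p j \<le> marg j + E"
  proof (rule AE_finite_allI)
    show "AE p in P. 0 < rpayoff j \<longrightarrow> p j \<le> marg j + E" for j
      by (cases "0 < rpayoff j") (auto intro: AE_component price_bound)
  qed simp
  thus ?thesis by simp
qed

lemma top_sales_covered:
  assumes \<delta>: "0 < \<delta>" "\<delta> < E"
  shows "pr ({p. p k = marg k + E} \<inter> {p. 0 < seller_utility X k p}) \<le>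
    (\<Sum>j\<in>{j. 0 < rpayoff j}. pr (missed_sale j (marg j + E) \<delta>))"
proof -
  have \<delta>E: "\<delta> \<le> marg j + E" for j using \<delta> marg_nonneg[of j] by simp
  have "AE p in P. p \<in> {p. p k = marg k + E} \<inter> {p. 0 < seller_utility X k p} \<longrightarrow>
      p \<in> (\<Union>j\<in>{j. 0 < rpayoff j}. missed_sale j (marg j + E) \<delta>)"
    using AE_rival[OF E_pos] AE_active_prices_bounded AE_nonneg_prices
  proof eventually_elim
    case (elim p)
    show ?case
    proof
      assume "p \<in> {p. p k = marg k + E} \<inter> {p. 0 < seller_utility X k p}"
      hence pk: "p k = marg k + E" and "0 < seller_utility X k p" by auto
      hence "k \<in> X p" using utility_pos_iff[of p k] marg_nonneg[of k] E_pos by simp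
      then obtain j where jX: "j \<notin> X p" and j: "0 < rpayoff j" "marg j + E \<le> p j"
        and sells: "\<forall>y. 0 \<le> y \<longrightarrow> y < marg j + E \<longrightarrow> j \<in> X (p(j := y))"
        using elim pk by auto
      have "p j = marg j + E" using j elim by (meson antisym)
      moreover have "\<not> 0 < seller_utility X j p" using jX by (simp add: seller_utility_def)
      moreover have "p \<in> sells_at j (marg j + E - \<delta>)"
        using sells \<delta> \<delta>E[of j] sells_at_iff[of "marg j + E - \<delta>" p j] marg_nonneg[of j] by simp
      ultimately have "p \<in> missed_sale j (marg j + E) \<delta>"
        using elim unfolding missed_sale_def by simp
      thus "p \<in> (\<Union>j\<in>{j. 0 < rpayoff j}. missed_sale j (marg j + E) \<delta>)" using j by blast
    qed
  qed
  hence "pr ({p. p k = marg k + E} \<inter> {p. 0 < seller_utility X k p}) \<le>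
      pr (\<Union>j\<in>{j. 0 < rpayoff j}. missed_sale j (marg j + E) \<delta>)"
    using \<delta>E by (intro PS.P.finite_measure_mono_AE) (auto intro!: sets.finite_UN)
  also have "\<dots> \<le> (\<Sum>j\<in>{j. 0 < rpayoff j}. pr (missed_sale j (marg j + E) \<delta>))"
    using \<delta>E by (intro PS.P.finite_measure_subadditive_finite) auto
  finally show ?thesis .
qed

text \<open>The sales at the atom are covered by rivals that are unsold at the top of their
  supports but sell just below; one of them does so with probability bounded away from zero
  uniformly in the undercut, and for it undercutting pays.\<close>

lemma no_top_atom:
  assumes k: "0 < rpayoff k" and atom: "0 < measure (M k) {marg k + E}"
  shows False
proof -
  define t where "t j = marg j + E" for j
  define J where "J = {j. 0 < rpayoff j}"
  define B where "B = {p. p k = t k} \<inter> {p. 0 < seller_utility X k p}"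
  have t: "0 < t j" "E \<le> t j" for j using marg_nonneg[of j] E_pos by (simp_all add: t_def)
  have "rpayoff k * measure (M k) {t k} \<le> t k * pr B"
    unfolding B_def using rpayoff_mult_measure_le_sales[of "{t k}" "t k" k] t(1)[of k] by simp
  moreover have "0 < rpayoff k * measure (M k) {t k}" using k atom by (simp add: t_def)
  ultimately have "0 < t k * pr B" by linarith
  hence "0 < pr B" using t(1)[of k] by (simp add: zero_less_mult_iff)
  have mono: "pr (missed_sale j (t j) \<delta>) \<le> pr (missed_sale j (t j) \<delta>')"
    if "0 < \<delta>" "\<delta> \<le> \<delta>'" "\<delta>' < E" for j \<delta> \<delta>'
    using that t[of j] missed_sale_mono[of \<delta> \<delta>' "t j" j]
    by (intro PS.P.finite_measure_mono) auto
  have cover: "pr B \<le> (\<Sum>j\<in>J. pr (missed_sale j (t j) \<delta>))" if "0 < \<delta>" "\<delta> < E" for \<delta>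
    using top_sales_covered[OF that, of k] unfolding B_def J_def t_def .
  have "\<exists>j\<in>J. \<forall>\<delta>. 0 < \<delta> \<longrightarrow> \<delta> < E \<longrightarrow> pr B / card J \<le> pr (missed_sale j (t j) \<delta>)"
    by (rule finite_sum_ge_imp_uniform_term[of J "pr B" E "\<lambda>j \<delta>. pr (missed_sale j (t j) \<delta>)"])
      (use cover mono \<open>0 < pr B\<close> E_pos in auto)
  then obtain j where "j \<in> J" and c: "\<And>\<delta>. 0 < \<delta> \<Longrightarrow> \<delta> < E \<Longrightarrow> pr B / card J \<le> pr (missed_sale j (t j) \<delta>)"
    by blast
  define c where "c = pr B / card J"
  have "J \<noteq> {}" using \<open>j \<in> J\<close> by blast
  hence "0 < c" unfolding c_def using \<open>0 < pr B\<close> by (simp add: card_gt_0_iff)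
  have c_half: "c \<le> pr (missed_sale j (t j) (E / 2))" using c[of "E / 2"] E_pos by (simp add: c_def)
  also have "\<dots> \<le> pr {p. p j = t j}"
    by (rule PS.P.finite_measure_mono) (auto simp: missed_sale_def)
  finally have "0 < measure (M j) {t j}" using \<open>0 < c\<close> prob_component[of "{t j}" j] by simp
  hence atom_j: "rpayoff j \<le> t j * pr (sells_at j (t j))" by (rule rpayoff_le_atom[OF t(1)])
  have undercut: "(t j - \<delta>) * (pr (sells_at j (t j)) + c) \<le> rpayoff j" if "0 < \<delta>" "\<delta> < E" for \<delta>
  proof -
    have "(t j - \<delta>) * (pr (sells_at j (t j)) + c) \<le>
        (t j - \<delta>) * (pr (sells_at j (t j)) + pr (missed_sale j (t j) \<delta>))"
      using that t[of j] c[OF that] unfolding c_def by (intro mult_left_mono) auto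
    also have "\<dots> \<le> rpayoff j" using that t[of j] by (intro undercut_gain) auto
    finally show ?thesis .
  qed
  have "c \<le> 1" using c_half PS.P.prob_le_1[of "missed_sale j (t j) (E / 2)"] by linarith
  show False
    by (rule undercut_profitable[OF t(1)[of j] \<open>0 < c\<close> E_pos PS.P.prob_le_1 \<open>c \<le> 1\<close> atom_j undercut])
qed

text \<open>Independence: a sale by i at price at least marg i + l forces some active rival j to
  price in the top interval [marg j + l, marg j + E].\<close>

lemma high_sales_covered:
  assumes l: "0 < l"
  shows "pr ({p. marg i + l \<le> p i} \<inter> {p. 0 < seller_utility X i p}) \<le>
    measure (M i) {marg i + l..} *
      (\<Sum>j\<in>{j. 0 < rpayoff j \<and> j \<noteq> i}. measure (M j) {marg j + l..marg j + E})"
proof -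
  define J where "J = {j. 0 < rpayoff j \<and> j \<noteq> i}"
  define R where "R j = {p. p i \<in> {marg i + l..}} \<inter> {p. p j \<in> {marg j + l..marg j + E}}" for j
  have R_sets: "R j \<in> sets P" for j unfolding R_def by (intro sets.Int component_sets) auto
  have "AE p in P. p \<in> {p. marg i + l \<le> p i} \<inter> {p. 0 < seller_utility X i p} \<longrightarrow> p \<in> (\<Union>j\<in>J. R j)"
    using AE_rival[OF l] AE_active_prices_bounded
  proof eventually_elim
    case (elim p)
    show ?case
    proof
      assume "p \<in> {p. marg i + l \<le> p i} \<inter> {p. 0 < seller_utility X i p}"
      hence pi: "marg i + l \<le> p i" and "0 < seller_utility X i p" by auto
      moreover have "0 < p i" using pi marg_nonneg[of i] l by linarith
      ultimately have "i \<in> X p" using utility_pos_iff by blast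
      then obtain j where "j \<notin> X p" "0 < rpayoff j" "marg j + l \<le> p j" using elim pi by blast
      moreover from this have "p j \<le> marg j + E" using elim by blast
      ultimately show "p \<in> (\<Union>j\<in>J. R j)"
        using pi \<open>i \<in> X p\<close> unfolding J_def R_def by auto
    qed
  qed
  hence "pr ({p. marg i + l \<le> p i} \<inter> {p. 0 < seller_utility X i p}) \<le> pr (\<Union>j\<in>J. R j)"
    by (intro PS.P.finite_measure_mono_AE) (auto intro!: sets.finite_UN R_sets)
  also have "\<dots> \<le> (\<Sum>j\<in>J. pr (R j))"
    by (intro PS.P.finite_measure_subadditive_finite) (auto intro: R_sets)
  also have "\<dots> = (\<Sum>j\<in>J. measure (M i) {marg i + l..} * measure (M j) {marg j + l..marg j + E})"
    unfolding R_def J_def by (intro sum.cong refl prob_components) auto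
  finally show ?thesis unfolding J_def by (simp add: sum_distrib_left)
qed

lemma rpayoff_le_rival_top_mass:
  assumes i: "0 < rpayoff i" and l: "0 < l" and pos: "0 < measure (M i) {marg i + l..}"
  shows "rpayoff i \<le> (marg i + E) *
    (\<Sum>j\<in>{j. 0 < rpayoff j \<and> j \<noteq> i}. measure (M j) {marg j + l..marg j + E})"
proof -
  define m where "m = (\<Sum>j\<in>{j. 0 < rpayoff j \<and> j \<noteq> i}. measure (M j) {marg j + l..marg j + E})"
  have c: "0 \<le> marg i + E" using marg_nonneg[of i] E_pos by simp
  have "rpayoff i * measure (M i) {marg i + l..} \<le>
      (marg i + E) * pr ({p. p i \<in> {marg i + l..}} \<inter> {p. 0 < seller_utility X i p})"
    using AE_component[OF price_bound[OF i]] c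
    by (intro rpayoff_mult_measure_le_sales) (auto elim: eventually_mono)
  also have "\<dots> \<le> (marg i + E) * (measure (M i) {marg i + l..} * m)"
    using high_sales_covered[OF l, of i] c unfolding m_def by (intro mult_left_mono) auto
  finally have "measure (M i) {marg i + l..} * rpayoff i \<le> measure (M i) {marg i + l..} * ((marg i + E) * m)"
    by (simp add: algebra_simps)
  thus ?thesis using pos unfolding m_def by simp
qed

text \<open>Seller i keeps positive mass above marg i + l for every l < E, but the rival mass that
  its sales there require vanishes as l tends to E.\<close>

lemma no_top_mass:
  assumes i: "0 < rpayoff i" and pos: "\<And>l. l < E \<Longrightarrow> 0 < measure (M i) {marg i + l..}"
    and no_atom: "\<And>j. 0 < rpayoff j \<Longrightarrow> measure (M j) {marg j + E} = 0"
  shows False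
proof -
  define J where "J = {j. 0 < rpayoff j \<and> j \<noteq> i}"
  define l where "l n = E - E / 2 / Suc n" for n
  have l: "0 < l n" "l n < E" for n
  proof -
    have "E / 2 / Suc n \<le> E / 2" using frac_le[of "E / 2" "E / 2" 1 "Suc n"] E_pos by simp
    moreover have "0 < E / 2 / Suc n" using E_pos by simp
    ultimately show "0 < l n" "l n < E" unfolding l_def by linarith+
  qed
  have "(\<lambda>n. measure (M j) {marg j + l n..marg j + E}) \<longlonglongrightarrow> 0" if "j \<in> J" for j
    using measure_top_interval_tendsto[of "E / 2" j "marg j + E"] E_pos no_atom[of j] that
    by (simp add: l_def algebra_simps J_def)
  hence "(\<lambda>n. \<Sum>j\<in>J. measure (M j) {marg j + l n..marg j + E}) \<longlonglongrightarrow> 0"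
    by (rule tendsto_null_sum)
  moreover have "0 < rpayoff i / (marg i + E)" using i marg_nonneg[of i] E_pos by simp
  ultimately have "\<forall>\<^sub>F n in sequentially.
      (\<Sum>j\<in>J. measure (M j) {marg j + l n..marg j + E}) < rpayoff i / (marg i + E)"
    by (rule order_tendstoD)
  then obtain n where n: "(\<Sum>j\<in>J. measure (M j) {marg j + l n..marg j + E}) < rpayoff i / (marg i + E)"
    by (auto dest: eventually_happens)
  have "rpayoff i \<le> (marg i + E) * (\<Sum>j\<in>J. measure (M j) {marg j + l n..marg j + E})"
    unfolding J_def using i l pos by (intro rpayoff_le_rival_top_mass) auto
  also have "\<dots> < rpayoff i"
    using n marg_nonneg[of i] E_pos by (simp add: pos_less_divide_eq mult.commute)
  finally show False by simp
qed

end

definition excess :: "'a \<Rightarrow> real" where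
  "excess j = Sup {l. 0 < measure (M j) {marg j + l..}}"

lemma excess_bdd_above:
  assumes "0 < rpayoff j"
  shows "bdd_above {l. 0 < measure (M j) {marg j + l..}}"
proof (rule bdd_aboveI)
  fix l assume l: "l \<in> {l. 0 < measure (M j) {marg j + l..}}"
  show "l \<le> v UNIV"
  proof (rule ccontr)
    assume "\<not> l \<le> v UNIV"
    hence "{marg j + l..} \<subseteq> {x. v UNIV < x}" using marg_nonneg[of j] by auto
    hence "measure (M j) {marg j + l..} \<le> measure (M j) {x. v UNIV < x}"
      by (intro PS.M.finite_measure_mono) (auto simp: sets_M)
    moreover have "measure (M j) {x. v UNIV < x} = 0"
      using AE_price_le_value[OF assms] unfolding AE_M_le_iff .
    ultimately show False using l by simp
  qed
qed

lemma less_excess_iff: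
  assumes "0 < rpayoff j"
  shows "l < excess j \<longleftrightarrow> (\<exists>s. 0 < measure (M j) {marg j + s..} \<and> l < s)"
proof -
  have "measure (M j) {0..} = 1"
    using AE_M_nonneg[of j] PS.M.prob_eq_1[of "{0..}" j] by (simp add: sets_M)
  hence "- marg j \<in> {l. 0 < measure (M j) {marg j + l..}}" by simp
  thus ?thesis
    unfolding excess_def using less_cSup_iff[OF _ excess_bdd_above[OF assms]] by blast
qed

lemma AE_le_marg_plus_excess:
  assumes "0 < rpayoff j" and "excess j \<le> E"
  shows "AE x in M j. x \<le> marg j + E"
proof (rule AE_le_if_null_above)
  fix c assume "marg j + E < c"
  hence "excess j < c - marg j" using assms(2) by simp
  hence "\<not> 0 < measure (M j) {c..}"
    using cSup_upper[OF _ excess_bdd_above[OF assms(1)], of "c - marg j"] unfolding excess_def by force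
  thus "measure (M j) {c..} = 0" using measure_nonneg[of "M j" "{c..}"] by linarith
qed

lemma measure_above_pos_below_excess:
  assumes "0 < rpayoff j" and "l < excess j"
  shows "0 < measure (M j) {marg j + l..}"
proof -
  obtain s where s: "0 < measure (M j) {marg j + s..}" "l < s" using less_excess_iff assms by blast
  have "measure (M j) {marg j + s..} \<le> measure (M j) {marg j + l..}"
    by (rule PS.M.finite_measure_mono) (use s(2) in \<open>auto simp: sets_M\<close>)
  thus ?thesis using s(1) by linarith
qed

lemma max_excess:
  assumes "0 < rpayoff i"
  obtains k where "0 < rpayoff k" and "\<And>j. 0 < rpayoff j \<Longrightarrow> excess j \<le> excess k"
proof -
  have "{j. 0 < rpayoff j} \<noteq> {}" using assms by blast
  then obtain k where k: "0 < rpayoff k" and "Max (excess ` {j. 0 < rpayoff j}) = excess k"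
    using obtains_MAX[of "{j. 0 < rpayoff j}" excess] finite by blast
  thus ?thesis using that by (metis Max_ge finite finite_imageI imageI mem_Collect_eq)
qed

lemma AE_price_le_marg:
  assumes "0 < rpayoff i"
  shows "AE x in M i. x \<le> marg i"
proof (rule ccontr)
  assume not_le: "\<not> ?thesis"
  obtain k where k: "0 < rpayoff k" and k_max: "\<And>j. 0 < rpayoff j \<Longrightarrow> excess j \<le> excess k"
    using max_excess[OF assms] by blast
  define E where "E = excess k"
  have bound: "AE x in M j. x \<le> marg j + E" if "0 < rpayoff j" for j
    using AE_le_marg_plus_excess[OF that k_max[OF that]] unfolding E_def .
  have pos: "0 < measure (M k) {marg k + l..}" if "l < E" for l
    using measure_above_pos_below_excess[OF k] that unfolding E_def .
  have "0 < E"
  proof (rule ccontr)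
    assume "\<not> 0 < E"
    have "AE x in M i. x \<le> marg i"
      using bound[OF assms]
    proof eventually_elim
      case (elim x)
      thus ?case using \<open>\<not> 0 < E\<close> by simp
    qed
    thus False using not_le by contradiction
  qed
  show False
  proof (cases "\<exists>j. 0 < rpayoff j \<and> 0 < measure (M j) {marg j + E}")
    case True
    then obtain j where j: "0 < rpayoff j" "0 < measure (M j) {marg j + E}" by blast
    show False by (rule no_top_atom[OF \<open>0 < E\<close> bound j])
  next
    case False
    have no_atom: "measure (M j) {marg j + E} = 0" if "0 < rpayoff j" for j
    proof -
      have "\<not> 0 < measure (M j) {marg j + E}" using False that by blast
      thus ?thesis using measure_nonneg[of "M j" "{marg j + E}"] by linarith
    qed
    show False by (rule no_top_mass[OF \<open>0 < E\<close> bound k pos no_atom])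
  qed
qed

lemma AE_sells_at_marg:
  assumes m: "0 < marg i"
  shows "AE p in P. p i = marg i \<and> i \<in> X p"
proof -
  have le: "AE p in P. p i \<le> marg i"
    using marg_le_rpayoff[of i] m by (intro AE_component AE_price_le_marg) simp
  have bounds: "AE p in P. 0 \<le> seller_utility X i p \<and> seller_utility X i p \<le> marg i"
    using le AE_nonneg_prices
  proof eventually_elim
    case (elim p)
    thus ?case using m by (auto simp: seller_utility_def nonneg_prices_def)
  qed
  define f where "f p = ennreal (marg i - seller_utility X i p)" for p
  have "payoff i + integral\<^sup>N P f = (\<integral>\<^sup>+ p. ennreal (seller_utility X i p) + f p \<partial>P)"
    unfolding payoff_def f_def by (rule nn_integral_add[symmetric]) measurable
  also have "\<dots> = (\<integral>\<^sup>+ p. ennreal (marg i) \<partial>P)"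
    by (rule nn_integral_cong_AE, use bounds in eventually_elim) (simp add: f_def ennreal_plus[symmetric])
  also have "\<dots> = ennreal (marg i)" by (simp add: PS.P.emeasure_space_1 nn_integral_const)
  finally have sum: "payoff i + integral\<^sup>N P f = ennreal (marg i)" .
  have "ennreal (marg i) \<le> payoff i" unfolding payoff_eq using marg_le_rpayoff by (rule ennreal_leI)
  hence "ennreal (marg i) + integral\<^sup>N P f \<le> ennreal (marg i) + 0"
    using sum by (metis add.right_neutral add_right_mono)
  hence "integral\<^sup>N P f = 0" by (simp add: ennreal_add_left_cancel_le)
  moreover have "f \<in> borel_measurable P" unfolding f_def by measurable
  ultimately have "AE p in P. f p = 0" by (simp add: nn_integral_0_iff_AE)
  thus ?thesis
    using bounds le
  proof eventually_elim
    case (elim p)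
    hence "marg i \<le> seller_utility X i p" by (simp add: f_def ennreal_eq_0_iff)
    thus ?case using elim m by (auto simp: seller_utility_def split: if_splits)
  qed
qed

lemma payoff_eq_0_if_marg_eq_0:
  assumes "marg i = 0"
  shows "payoff i = 0"
proof (rule ccontr)
  assume "payoff i \<noteq> 0"
  hence "AE p in P. p i \<le> 0"
    using assms AE_component[OF AE_price_le_marg, of i] rpayoff_pos_iff by simp
  hence "payoff i = (\<integral>\<^sup>+ p. 0 \<partial>P)" unfolding payoff_def
    by (intro nn_integral_cong_AE) (auto elim!: eventually_mono simp: seller_utility_def ennreal_neg)
  thus False using \<open>payoff i \<noteq> 0\<close> by simp
qed

end

theorem mainTheorem9:
  fixes v :: "('a::finite) set \<Rightarrow> real"
    and X :: "('a \<Rightarrow> real) \<Rightarrow> 'a set"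
    and M :: "'a \<Rightarrow> real measure"
  assumes "valuation v" and "gross_substitutes v"
    and "decision_map v X" and "GS_consistent X"
    and "mixed_NE X M"
  shows "\<forall>i. (marginal v {i} (UNIV - {i}) > 0 \<longrightarrow>
              (AE p in PiM UNIV M. p i = marginal v {i} (UNIV - {i}) \<and> i \<in> X p))
          \<and> (marginal v {i} (UNIV - {i}) = 0 \<longrightarrow>
              (\<integral>\<^sup>+ p. ennreal (seller_utility X i p) \<partial>PiM UNIV M) = 0)"
proof -
  interpret pricing_game v X M by (rule pricing_game.intro) (rule assms)+
  show ?thesis
    using AE_sells_at_marg payoff_eq_0_if_marg_eq_0 unfolding marg_def payoff_def by blast
qed

end
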